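(* Let $\mathcal X$ be a complex Banach space, $0<p,q<\infty$, $\tau\ge0$, $s\ge0$, and $(r_l)_{l\ge0}\subset[0,1)$ with $c2^{-l}\le1-r_l\le C2^{-l}$. If $f\in\mathcal A(\mathcal X)$ and $$\|f\|_3:=\sup_{I\in\mathcal D(\mathbb T)}\frac1{|I|^\tau}\Big(\int_I\Big[\sum_{l=\operatorname{rk}(I)}^\infty2^{slq}\|f(r_l\zeta_x)\|_{\mathcal X}^q\Big]^{p/q}dx\Big)^{1/p}<\infty,$$ then $f\equiv0$.
   Context: $\mathbb D$ unit disc, $\mathbb T$ unit circle, $\zeta_x=e^{2\pi ix}$, $dx$ normalized arc length, $|I|$ normalized length. $\mathcal A(\mathcal X)$: analytic functions $\mathbb D\to\mathcal X$. Dyadic arcs $\mathcal D(\mathbb T)$: images of $[2^{-j}k,2^{-j}(k+1))$, $j\ge0$, $0\le k<2^j$ (so $\mathbb T\in\mathcal D(\mathbb T)$); $\operatorname{rk}(I)=j$ when $|I|=2^{-j}$. *)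

theory Defs
  imports "HOL-Analysis.Analysis"
begin

class complex_vector = real_vector +
  fixes scaleC :: "complex \<Rightarrow> 'a \<Rightarrow> 'a" (infixr \<open>*\<^sub>C\<close> 75)
  assumes scaleR_scaleC: "scaleR r x = scaleC (complex_of_real r) x"
    and scaleC_add_right: "scaleC a (x + y) = scaleC a x + scaleC a y"
    and scaleC_add_left: "scaleC (a + b) x = scaleC a x + scaleC b x"
    and scaleC_scaleC: "scaleC a (scaleC b x) = scaleC (a * b) x"
    and scaleC_one: "scaleC 1 x = x"

class complex_normed_vector = complex_vector + real_normed_vector +
  assumes norm_scaleC: "norm (scaleC a x) = cmod a * norm x"

definition analytic_disc :: "(complex \<Rightarrow> 'a::{complex_normed_vector,banach}) \<Rightarrow> bool" where
  "analytic_disc f \<longleftrightarrow>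
     (\<forall>z\<in>ball (0::complex) 1. \<exists>D. (f has_derivative (\<lambda>h. h *\<^sub>C D)) (at z))"

definition enn_powr :: "ennreal \<Rightarrow> real \<Rightarrow> ennreal" where
  "enn_powr a t = (if a = \<infinity> then \<infinity> else ennreal (enn2real a powr t))"

definition zeta :: "real \<Rightarrow> complex" where
  "zeta x = exp (2 * of_real pi * \<i> * of_real x)"

text \<open>The quantity inside the supremum for the dyadic arc of rank j, index k,
  i.e. the image of [k/2^j, (k+1)/2^j):
  |I|^(-tau) * (int_I [sum_{l >= j} 2^(s l q) ||f(r_l zeta_x)||^q]^(p/q) dx)^(1/p).\<close>
definition norm3_arc ::
  "(complex \<Rightarrow> 'a::{complex_normed_vector,banach}) \<Rightarrow> (nat \<Rightarrow> real) \<Rightarrow> real \<Rightarrow> real \<Rightarrow> real \<Rightarrow> real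
     \<Rightarrow> nat \<Rightarrow> nat \<Rightarrow> ennreal" where
  "norm3_arc f r p q tau s j k =
     ennreal ((1 / 2 ^ j) powr (- tau)) *
     enn_powr
       (\<integral>\<^sup>+ x \<in> {real k / 2 ^ j ..< (real k + 1) / 2 ^ j}.
          enn_powr (\<Sum>l. if l \<ge> j then ennreal (2 powr (s * real l * q) * norm (f (of_real (r l) * zeta x)) powr q) else 0)
                   (p / q) \<partial>lborel)
       (1 / p)"

definition norm3 ::
  "(complex \<Rightarrow> 'a::{complex_normed_vector,banach}) \<Rightarrow> (nat \<Rightarrow> real) \<Rightarrow> real \<Rightarrow> real \<Rightarrow> real \<Rightarrow> real \<Rightarrow> ennreal" where
  "norm3 f r p q tau s = (SUP (j, k) \<in> {(j, k). k < 2 ^ j}. norm3_arc f r p q tau s j k)"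

end

theory Submission
  imports Defs "HOL-Complex_Analysis.Complex_Analysis" "HOL-Computational_Algebra.Polynomial"
begin

text \<open>Suppose \<open>f \<noteq> 0\<close>. Where \<open>B x < \<infinity>\<close> the terms
  of the series tend to zero, and \<open>\<parallel>f(r\<^sub>l \<zeta>\<^sub>x)\<parallel>\<^sup>p \<le> B x\<close>, so by dominated convergence the circle means
  \<open>\<integral> \<parallel>f(r\<^sub>l \<zeta>\<^sub>x)\<parallel>\<^sup>p dx\<close> tend to zero as \<open>r\<^sub>l \<rightarrow> 1\<close>.
  On the other hand, Hahn--Banach gives a functional \<open>\<phi>\<close> of norm at most one with \<open>g = \<phi> \<circ> f \<noteq> 0\<close>;
  writing \<open>g z = z\<^sup>n h z\<close> with \<open>h 0 \<noteq> 0\<close>, subharmonicity of \<open>|h|\<^sup>p\<close> bounds the circle means of \<open>|g|\<^sup>p\<close>,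
  and hence of \<open>\<parallel>f\<parallel>\<^sup>p\<close>, from below by \<open>\<rho>\<^sup>n\<^sup>p |h 0|\<^sup>p\<close> at radius \<open>\<rho>\<close>, a contradiction.\<close>

section \<open>Reduction to scalar holomorphic functions via Hahn--Banach\<close>

lemma scaleC_zero_left [simp]: "0 *\<^sub>C (x::'a::complex_vector) = 0"
  using scaleR_scaleC[of 0 x] by simp

lemma scaleC_minus_one: "(-1) *\<^sub>C (x::'a::complex_vector) = - x"
proof -
  have "x + (-1) *\<^sub>C x = (1 + -1) *\<^sub>C x" by (simp only: scaleC_add_left scaleC_one)
  then show ?thesis by (simp add: eq_neg_iff_add_eq_0 add.commute)
qed

lemma scaleC_eq_Re_Im: "c *\<^sub>C (x::'a::complex_vector) = Re c *\<^sub>R x + Im c *\<^sub>R (\<i> *\<^sub>C x)"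
proof -
  have "c = complex_of_real (Re c) + complex_of_real (Im c) * \<i>" by (simp add: complex_eq_iff)
  then have "c *\<^sub>C x = (complex_of_real (Re c) + complex_of_real (Im c) * \<i>) *\<^sub>C x" by simp
  also have "\<dots> = Re c *\<^sub>R x + Im c *\<^sub>R (\<i> *\<^sub>C x)"
    by (simp add: scaleC_add_left scaleC_scaleC scaleR_scaleC)
  finally show ?thesis .
qed

text \<open>Hahn--Banach by Zorn's lemma on partially defined functionals, represented by their graphs.\<close>

definition norming_graphs :: "'a::real_normed_vector \<Rightarrow> ('a \<times> real) set set" where
  "norming_graphs v = {G. (v, norm v) \<in> G \<and>
     (\<forall>x a b. (x,a)\<in>G \<longrightarrow> (x,b)\<in>G \<longrightarrow> a = b) \<and>
     (\<forall>x a y b. (x,a)\<in>G \<longrightarrow> (y,b)\<in>G \<longrightarrow> (x+y, a+b) \<in> G) \<and>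
     (\<forall>x a c. (x,a)\<in>G \<longrightarrow> (c *\<^sub>R x, c*a) \<in> G) \<and>
     (\<forall>x a. (x,a)\<in>G \<longrightarrow> a \<le> norm x)}"

lemma norming_graphsD:
  assumes "G \<in> norming_graphs v"
  shows "(v, norm v) \<in> G"
    and "(x,a) \<in> G \<Longrightarrow> (x,b) \<in> G \<Longrightarrow> a = b"
    and "(x,a) \<in> G \<Longrightarrow> (y,b) \<in> G \<Longrightarrow> (x+y, a+b) \<in> G"
    and "(x,a) \<in> G \<Longrightarrow> (c *\<^sub>R x, c*a) \<in> G"
    and "(x,a) \<in> G \<Longrightarrow> a \<le> norm x"
  using assms unfolding norming_graphs_def by blast+

lemma line_graph_in_norming_graphs:
  fixes v :: "'a::real_normed_vector"
  assumes "v \<noteq> 0"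
  shows "range (\<lambda>t. (t *\<^sub>R v, t * norm v)) \<in> norming_graphs v" (is "?B \<in> _")
proof -
  have mem: "(x, a) \<in> ?B \<longleftrightarrow> (\<exists>t. x = t *\<^sub>R v \<and> a = t * norm v)" for x a by auto
  show ?thesis
    unfolding norming_graphs_def
  proof (intro CollectI conjI allI impI)
    show "(v, norm v) \<in> ?B" unfolding mem by (intro exI[of _ 1]) simp
  next
    fix x a b assume "(x, a) \<in> ?B" "(x, b) \<in> ?B"
    then show "a = b" unfolding mem using assms by (metis scaleR_cancel_right)
  next
    fix x a y b assume "(x, a) \<in> ?B" "(y, b) \<in> ?B"
    then show "(x + y, a + b) \<in> ?B" unfolding mem by (metis distrib_right scaleR_add_left)
  next
    fix x a c assume "(x, a) \<in> ?B"
    then show "(c *\<^sub>R x, c * a) \<in> ?B" unfolding mem by (metis mult.assoc scaleR_scaleR)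
  next
    fix x a assume "(x, a) \<in> ?B"
    then show "a \<le> norm x" unfolding mem by (auto simp: mult_right_mono)
  qed
qed

lemma Union_chain_in_norming_graphs:
  assumes C: "C \<in> chains (norming_graphs v)" "C \<noteq> {}"
  shows "\<Union>C \<in> norming_graphs v"
proof -
  have CA: "C \<subseteq> norming_graphs v" and ch: "\<And>X Y. X \<in> C \<Longrightarrow> Y \<in> C \<Longrightarrow> X \<subseteq> Y \<or> Y \<subseteq> X"
    using C unfolding chains_def chain_subset_def by auto
  have two: "\<exists>X\<in>C. z \<in> X \<and> z' \<in> X" if "z \<in> \<Union>C" "z' \<in> \<Union>C" for z z'
    using that ch by blast
  show ?thesis
    unfolding norming_graphs_def
  proof (intro CollectI conjI allI impI)
    obtain X where "X \<in> C" using C(2) by blast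
    then show "(v, norm v) \<in> \<Union>C" using CA norming_graphsD(1) by blast
  next
    fix x a b assume "(x,a) \<in> \<Union>C" "(x,b) \<in> \<Union>C"
    then obtain X where "X \<in> C" "(x,a) \<in> X" "(x,b) \<in> X" using two by blast
    then show "a = b" using CA norming_graphsD(2) by blast
  next
    fix x a y b assume "(x,a) \<in> \<Union>C" "(y,b) \<in> \<Union>C"
    then obtain X where "X \<in> C" "(x,a) \<in> X" "(y,b) \<in> X" using two by blast
    then show "(x+y, a+b) \<in> \<Union>C" using CA norming_graphsD(3) by blast
  next
    fix x a c assume "(x,a) \<in> \<Union>C"
    then show "(c *\<^sub>R x, c*a) \<in> \<Union>C" using CA norming_graphsD(4) by blast
  next
    fix x a assume "(x,a) \<in> \<Union>C"
    then show "a \<le> norm x" using CA norming_graphsD(5) by blast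
  qed
qed

lemma norming_graph_adjoin_value:
  assumes M: "M \<in> norming_graphs v"
  obtains c where "\<And>x a. (x,a) \<in> M \<Longrightarrow> a - norm (x - w) \<le> c"
    and "\<And>y b. (y,b) \<in> M \<Longrightarrow> c \<le> norm (y + w) - b"
proof -
  have zero: "(0, 0) \<in> M" using norming_graphsD(4)[OF M norming_graphsD(1)[OF M], of 0] by simp
  define L where "L = {a - norm (x - w) | x a. (x,a) \<in> M}"
  have key: "a - norm (x - w) \<le> norm (y + w) - b" if "(x,a) \<in> M" "(y,b) \<in> M" for x a y b
  proof -
    have "a + b \<le> norm ((x - w) + (y + w))"
      using norming_graphsD(5)[OF M norming_graphsD(3)[OF M that]] by simp
    also have "\<dots> \<le> norm (x - w) + norm (y + w)" by (rule norm_triangle_ineq)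
    finally show ?thesis by simp
  qed
  have "bdd_above L" unfolding L_def bdd_above_def using key[OF _ zero] by fastforce
  moreover have "L \<noteq> {}" using zero unfolding L_def by blast
  ultimately show ?thesis
    by (intro that[of "Sup L"] cSup_upper cSup_least) (auto simp: L_def intro: key)
qed

lemma norming_graph_adjoin_dominated:
  fixes x w :: "'a::real_normed_vector"
  assumes M: "M \<in> norming_graphs v" and xa: "(x,a) \<in> M"
    and c_ge: "\<And>x a. (x,a) \<in> M \<Longrightarrow> a - norm (x - w) \<le> c"
    and c_le: "\<And>y b. (y,b) \<in> M \<Longrightarrow> c \<le> norm (y + w) - b"
  shows "a + t * c \<le> norm (x + t *\<^sub>R w)"
proof -
  consider "t = 0" | "t > 0" | "t < 0" by linarith
  then show ?thesis
  proof cases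
    case 1 then show ?thesis using norming_graphsD(5)[OF M xa] by simp
  next
    case 2
    have "c \<le> norm ((1/t) *\<^sub>R x + w) - (1/t) * a"
      using c_le[OF norming_graphsD(4)[OF M xa, of "1/t"]] .
    then have "t * c \<le> t * (norm ((1/t) *\<^sub>R x + w) - (1/t) * a)"
      using 2 by (simp add: mult_left_mono)
    also have "\<dots> = norm (t *\<^sub>R ((1/t) *\<^sub>R x + w)) - a" using 2 by (simp add: right_diff_distrib)
    also have "t *\<^sub>R ((1/t) *\<^sub>R x + w) = x + t *\<^sub>R w" using 2 by (simp add: scaleR_add_right)
    finally show ?thesis by simp
  next
    case 3
    define u where "u = - t"
    have u: "u > 0" using 3 by (simp add: u_def)
    have "u * ((1/u) * a - norm ((1/u) *\<^sub>R x - w)) \<le> u * c"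
      using u c_ge[OF norming_graphsD(4)[OF M xa, of "1/u"]] by (intro mult_left_mono) auto
    also have "u * ((1/u) * a - norm ((1/u) *\<^sub>R x - w)) = a - norm (u *\<^sub>R ((1/u) *\<^sub>R x - w))"
      using u by (simp add: right_diff_distrib)
    also have "u *\<^sub>R ((1/u) *\<^sub>R x - w) = x + t *\<^sub>R w" using u by (simp add: scaleR_diff_right u_def)
    finally show ?thesis by (simp add: u_def)
  qed
qed

lemma norming_graph_adjoin:
  assumes M: "M \<in> norming_graphs v" and w: "\<And>a. (w, a) \<notin> M"
    and c_ge: "\<And>x a. (x,a) \<in> M \<Longrightarrow> a - norm (x - w) \<le> c"
    and c_le: "\<And>y b. (y,b) \<in> M \<Longrightarrow> c \<le> norm (y + w) - b"
  shows "{(x + t *\<^sub>R w, a + t * c) | x a t. (x,a) \<in> M} \<in> norming_graphs v" (is "?M' \<in> _")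
  unfolding norming_graphs_def
proof (rule CollectI, intro conjI allI impI)
  have "(v, norm v) = (v + 0 *\<^sub>R w, norm v + 0 * c)" by simp
  then show "(v, norm v) \<in> ?M'" using norming_graphsD(1)[OF M] by blast
next
  fix x a b assume "(x,a) \<in> ?M'" "(x,b) \<in> ?M'"
  then obtain y1 a1 t1 y2 a2 t2 where h: "(y1,a1)\<in>M" "(y2,a2)\<in>M" "x = y1 + t1 *\<^sub>R w"
     "a = a1 + t1*c" "x = y2 + t2 *\<^sub>R w" "b = a2 + t2*c"
    by blast
  have t: "t1 = t2"
  proof (rule ccontr)
    assume ne: "t1 \<noteq> t2"
    have "(y2 + (-1) *\<^sub>R y1, a2 + (-1)*a1) \<in> M"
      using norming_graphsD(3)[OF M h(2) norming_graphsD(4)[OF M h(1)]] .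
    then have "((1/(t1-t2)) *\<^sub>R (y2 - y1), (1/(t1-t2)) * (a2 - a1)) \<in> M"
      using norming_graphsD(4)[OF M, of "y2 - y1" "a2 - a1" "1/(t1-t2)"] by simp
    moreover have "y2 - y1 = (t1 - t2) *\<^sub>R w" using h(3) h(5) by (simp add: algebra_simps)
    ultimately show False using w ne by auto
  qed
  then have "y1 = y2" using h(3) h(5) by simp
  then show "a = b" using norming_graphsD(2)[OF M] h t by blast
next
  fix x a y b assume "(x,a) \<in> ?M'" "(y,b) \<in> ?M'"
  then obtain x1 a1 t1 y1 b1 t2 where h: "(x1,a1)\<in>M" "(y1,b1)\<in>M" "x = x1 + t1 *\<^sub>R w"
     "a = a1 + t1*c" "y = y1 + t2 *\<^sub>R w" "b = b1 + t2*c"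
    by blast
  have "(x+y, a+b) = ((x1+y1) + (t1+t2) *\<^sub>R w, (a1+b1) + (t1+t2)*c)"
    using h(3-6) by (simp add: algebra_simps scaleR_add_left)
  then show "(x+y, a+b) \<in> ?M'" using norming_graphsD(3)[OF M h(1,2)] by blast
next
  fix x a k assume "(x,a) \<in> ?M'"
  then obtain x1 a1 t1 where h: "(x1,a1)\<in>M" "x = x1 + t1 *\<^sub>R w" "a = a1 + t1*c"
    by blast
  have "(k *\<^sub>R x, k*a) = (k *\<^sub>R x1 + (k*t1) *\<^sub>R w, k*a1 + (k*t1)*c)"
    using h(2-3) by (simp add: algebra_simps scaleR_add_right)
  then show "(k *\<^sub>R x, k*a) \<in> ?M'" using norming_graphsD(4)[OF M h(1), of k] by blast
next
  fix x a assume "(x,a) \<in> ?M'"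
  then show "a \<le> norm x" using norming_graph_adjoin_dominated[OF M _ c_ge c_le] by blast
qed

lemma maximal_norming_graph_total:
  assumes M: "M \<in> norming_graphs v" and max: "\<forall>X\<in>norming_graphs v. M \<subseteq> X \<longrightarrow> X = M"
  shows "\<exists>a. (w, a) \<in> M"
proof (rule ccontr)
  assume w: "\<nexists>a. (w, a) \<in> M"
  obtain c where c_ge: "\<And>x a. (x,a) \<in> M \<Longrightarrow> a - norm (x - w) \<le> c"
    and c_le: "\<And>y b. (y,b) \<in> M \<Longrightarrow> c \<le> norm (y + w) - b"
    using norming_graph_adjoin_value[OF M] by blast
  define M' where "M' = {(x + t *\<^sub>R w, a + t * c) | x a t. (x,a) \<in> M}"
  have "M' \<in> norming_graphs v"
    unfolding M'_def using norming_graph_adjoin[OF M _ c_ge c_le] w by blast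
  moreover have "M \<subseteq> M'" unfolding M'_def by (force intro: exI[of _ 0])
  moreover have "(0, 0) \<in> M" using norming_graphsD(4)[OF M norming_graphsD(1)[OF M], of 0] by simp
  then have "(w, c) \<in> M'" unfolding M'_def by (force intro: exI[of _ 1])
  ultimately show False using max w by blast
qed

lemma maximal_norming_graph_exists:
  fixes v :: "'a::real_normed_vector"
  assumes "v \<noteq> 0"
  shows "\<exists>M\<in>norming_graphs v. \<forall>X\<in>norming_graphs v. M \<subseteq> X \<longrightarrow> X = M"
proof (rule Zorn_Lemma2, rule ballI)
  fix C assume C: "C \<in> chains (norming_graphs v)"
  show "\<exists>U\<in>norming_graphs v. \<forall>X\<in>C. X \<subseteq> U"
  proof (cases "C = {}")
    case True
    then show ?thesis using line_graph_in_norming_graphs[OF assms] by blast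
  next
    case False
    then show ?thesis using Union_chain_in_norming_graphs[OF C] by blast
  qed
qed

lemma real_norming_functional:
  fixes v :: "'a::real_normed_vector"
  assumes "v \<noteq> 0"
  obtains \<psi> :: "'a \<Rightarrow> real" where "\<And>x y. \<psi> (x + y) = \<psi> x + \<psi> y" "\<And>c x. \<psi> (c *\<^sub>R x) = c * \<psi> x"
    "\<And>x. \<psi> x \<le> norm x" "\<psi> v = norm v"
proof -
  obtain M where M: "M \<in> norming_graphs v" and max: "\<forall>X\<in>norming_graphs v. M \<subseteq> X \<longrightarrow> X = M"
    using maximal_norming_graph_exists[OF assms] by blast
  define \<psi> where "\<psi> x = (THE a. (x, a) \<in> M)" for x
  have graph: "(x, \<psi> x) \<in> M" for x
  proof -
    obtain a where xa: "(x, a) \<in> M" using maximal_norming_graph_total[OF M max] by blast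
    then have "\<psi> x = a" unfolding \<psi>_def using norming_graphsD(2)[OF M] by (intro the_equality) blast+
    then show ?thesis using xa by simp
  qed
  have psi_eq: "\<psi> x = a" if "(x, a) \<in> M" for x a
    using norming_graphsD(2)[OF M graph that] .
  show ?thesis
  proof (rule that)
    show "\<psi> (x + y) = \<psi> x + \<psi> y" for x y by (rule psi_eq[OF norming_graphsD(3)[OF M graph graph]])
    show "\<psi> (c *\<^sub>R x) = c * \<psi> x" for c x by (rule psi_eq[OF norming_graphsD(4)[OF M graph]])
    show "\<psi> x \<le> norm x" for x by (rule norming_graphsD(5)[OF M graph])
    show "\<psi> v = norm v" by (rule psi_eq[OF norming_graphsD(1)[OF M]])
  qed
qed

lemma complex_norming_functional:
  fixes v :: "'a::complex_normed_vector"
  assumes v: "v \<noteq> 0"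
  obtains \<phi> :: "'a \<Rightarrow> complex" where "\<And>x y. \<phi> (x + y) = \<phi> x + \<phi> y"
    "\<And>c x. \<phi> (c *\<^sub>C x) = c * \<phi> x" "\<And>x. cmod (\<phi> x) \<le> norm x" "\<phi> v \<noteq> 0"
proof -
  obtain \<psi> :: "'a \<Rightarrow> real" where add: "\<And>x y. \<psi> (x + y) = \<psi> x + \<psi> y"
    and sc: "\<And>c x. \<psi> (c *\<^sub>R x) = c * \<psi> x" and le: "\<And>x. \<psi> x \<le> norm x" and pv: "\<psi> v = norm v"
    using real_norming_functional[OF v] by blast
  define \<phi> where "\<phi> x = Complex (\<psi> x) (- \<psi> (\<i> *\<^sub>C x))" for x
  have add': "\<phi> (x + y) = \<phi> x + \<phi> y" for x y
    by (simp add: \<phi>_def scaleC_add_right add complex_eq_iff)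
  have real_sc: "\<phi> (r *\<^sub>R x) = complex_of_real r * \<phi> x" for r x
  proof -
    have "\<i> *\<^sub>C (r *\<^sub>R x) = r *\<^sub>R (\<i> *\<^sub>C x)"
      by (simp add: scaleR_scaleC scaleC_scaleC mult.commute)
    then show ?thesis by (simp add: \<phi>_def sc complex_eq_iff)
  qed
  have i_sc: "\<phi> (\<i> *\<^sub>C x) = \<i> * \<phi> x" for x
  proof -
    have "\<i> *\<^sub>C (\<i> *\<^sub>C x) = (-1) *\<^sub>R x" by (simp add: scaleC_scaleC scaleC_minus_one)
    then show ?thesis using sc[of "-1" x] by (simp add: \<phi>_def complex_eq_iff)
  qed
  have sc': "\<phi> (c *\<^sub>C x) = c * \<phi> x" for c x
    by (subst scaleC_eq_Re_Im) (simp add: add' real_sc i_sc complex_eq_iff)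
  have bound: "cmod (\<phi> x) \<le> norm x" for x
  proof (cases "\<phi> x = 0")
    case False
    define u where "u = cnj (\<phi> x) / cmod (\<phi> x)"
    have "cnj (\<phi> x) * \<phi> x = (complex_of_real (cmod (\<phi> x)))\<^sup>2"
      by (metis complex_norm_square mult.commute of_real_power)
    then have "\<phi> (u *\<^sub>C x) = complex_of_real (cmod (\<phi> x))"
      using False by (simp add: sc' u_def power2_eq_square)
    then have "cmod (\<phi> x) = \<psi> (u *\<^sub>C x)" by (simp add: \<phi>_def complex_eq_iff)
    also have "\<dots> \<le> norm (u *\<^sub>C x)" by (rule le)
    also have "\<dots> = norm x" using False by (simp add: norm_scaleC u_def norm_divide)
    finally show ?thesis .
  qed simp
  have "\<phi> v \<noteq> 0" using pv v by (simp add: \<phi>_def complex_eq_iff)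
  then show ?thesis using add' sc' bound that by blast
qed

lemma analytic_disc_continuous_on:
  assumes "analytic_disc f"
  shows "continuous_on (ball 0 1) f"
proof (rule continuous_at_imp_continuous_on, intro ballI)
  fix z :: complex assume "z \<in> ball 0 1"
  then obtain D where "(f has_derivative (\<lambda>h. h *\<^sub>C D)) (at z)"
    using assms unfolding analytic_disc_def by blast
  then show "isCont f z" by (rule has_derivative_continuous)
qed

lemma analytic_disc_functional_holomorphic:
  fixes f :: "complex \<Rightarrow> 'a::{complex_normed_vector,banach}" and \<phi> :: "'a \<Rightarrow> complex"
  assumes f: "analytic_disc f"
    and add: "\<And>x y. \<phi> (x + y) = \<phi> x + \<phi> y" and sc: "\<And>c x. \<phi> (c *\<^sub>C x) = c * \<phi> x"
    and bound: "\<And>x. cmod (\<phi> x) \<le> norm x"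
  shows "(\<lambda>z. \<phi> (f z)) holomorphic_on ball 0 1"
proof -
  have lin: "bounded_linear \<phi>"
    by (rule bounded_linear_intro[where K=1])
      (use bound in \<open>simp_all add: add scaleR_scaleC sc scaleR_conv_of_real\<close>)
  show ?thesis
    unfolding holomorphic_on_def
  proof
    fix z :: complex assume "z \<in> ball 0 1"
    then obtain D where "(f has_derivative (\<lambda>h. h *\<^sub>C D)) (at z)"
      using f unfolding analytic_disc_def by blast
    then have "((\<lambda>z. \<phi> (f z)) has_derivative (\<lambda>h. \<phi> (h *\<^sub>C D))) (at z)"
      by (rule bounded_linear.has_derivative[OF lin])
    also have "(\<lambda>h. \<phi> (h *\<^sub>C D)) = (*) (\<phi> D)"
      by (auto simp: sc mult.commute)
    finally show "(\<lambda>z. \<phi> (f z)) field_differentiable at z within ball 0 1"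
      by (auto simp: field_differentiable_def has_field_derivative_def intro: has_derivative_at_withinI)
  qed
qed

section \<open>Subharmonicity of \<open>|G|\<^sup>p\<close> on the unit circle\<close>

lemma norm_zeta [simp]: "cmod (zeta x) = 1"
  by (simp add: zeta_def norm_exp_eq_Re)

lemma continuous_on_zeta: "continuous_on T zeta"
  unfolding zeta_def by (intro continuous_intros)

lemma continuous_on_compose_zeta:
  assumes "continuous_on (sphere 0 1) F"
  shows "continuous_on T (\<lambda>x. F (zeta x))"
  by (rule continuous_on_compose2[OF assms continuous_on_zeta]) auto

lemma Cauchy_mean_value_zeta:
  fixes G :: "complex \<Rightarrow> complex"
  assumes "G holomorphic_on S" "open S" "cball 0 1 \<subseteq> S"
  shows "((\<lambda>x. G (zeta x)) has_integral G 0) {0..1}"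
proof -
  have "G holomorphic_on cball 0 1" using assms holomorphic_on_subset by blast
  then have "((\<lambda>u. G u / (u - 0)) has_contour_integral (2 * of_real pi * \<i> * G 0)) (circlepath 0 1)"
    by (intro Cauchy_integral_circlepath_simple) auto
  then have "((\<lambda>x. G (circlepath 0 1 x) / circlepath 0 1 x * vector_derivative (circlepath 0 1) (at x))
        has_integral (2 * of_real pi * \<i> * G 0)) {0..1}"
    unfolding has_contour_integral by simp
  moreover have "G (circlepath 0 1 x) / circlepath 0 1 x * vector_derivative (circlepath 0 1) (at x)
      = (2 * of_real pi * \<i>) * G (zeta x)" for x
    by (subst vector_derivative_circlepath) (simp add: circlepath zeta_def)
  ultimately have "((\<lambda>x. (2 * of_real pi * \<i>) * G (zeta x)) has_integral (2 * of_real pi * \<i> * G 0)) {0..1}"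
    by simp
  then show ?thesis by (simp add: has_integral_mult_right_iff)
qed

lemma norm_center_le_integral_circle:
  fixes G :: "complex \<Rightarrow> complex"
  assumes "G holomorphic_on S" "open S" "cball 0 1 \<subseteq> S"
    and "F integrable_on {0..1}" "\<And>x. x \<in> {0..1} \<Longrightarrow> cmod (G (zeta x)) \<le> F x"
  shows "cmod (G 0) \<le> integral {0..1} F"
proof -
  have mean: "((\<lambda>x. G (zeta x)) has_integral G 0) {0..1}"
    by (rule Cauchy_mean_value_zeta[OF assms(1-3)])
  then have "cmod (integral {0..1} (\<lambda>x. G (zeta x))) \<le> integral {0..1} F"
    using assms(4,5) by (intro integral_norm_bound_integral) auto
  then show ?thesis using mean by (simp add: integral_unique)
qed

lemma Re_poly_mult_cnj_on_circle:
  fixes Q :: "complex poly"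
  shows "\<exists>R. \<forall>z. cmod z = 1 \<longrightarrow> Re (poly P z * cnj (poly Q z)) = Re (poly R z)"
proof (induction Q arbitrary: P)
  case 0
  then show ?case by (auto intro: exI[of _ 0])
next
  case (pCons c Q)
  obtain a P' where P: "P = pCons a P'" by (cases P) auto
  obtain R where R: "\<And>z. cmod z = 1 \<Longrightarrow> Re (poly P' z * cnj (poly Q z)) = Re (poly R z)"
    using pCons.IH by blast
  show ?case
  proof (intro exI[of _ "smult (cnj c) P + smult (cnj a) (pCons 0 Q) + R"] allI impI)
    fix z :: complex assume z: "cmod z = 1"
    have zz: "z * cnj z = 1" using z by (simp add: complex_norm_square[symmetric])
    have "poly P z * cnj (poly (pCons c Q) z)
        = poly P z * cnj c + cnj (cnj a * (z * poly Q z)) + poly P' z * cnj (poly Q z) * (z * cnj z)"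
      by (simp add: P algebra_simps)
    then have "Re (poly P z * cnj (poly (pCons c Q) z))
        = Re (poly P z * cnj c) + Re (cnj a * (z * poly Q z)) + Re (poly P' z * cnj (poly Q z))"
      by (simp only: zz mult_1_right plus_complex.sel cnj.sel(1))
    then show "Re (poly P z * cnj (poly (pCons c Q) z))
        = Re (poly (smult (cnj c) P + smult (cnj a) (pCons 0 Q) + R) z)"
      using R[OF z] by (simp add: algebra_simps)
  qed
qed

lemma real_polynomial_function_on_circle:
  fixes w :: "complex \<Rightarrow> real"
  assumes "real_polynomial_function w"
  obtains P :: "complex poly" where "\<And>z. cmod z = 1 \<Longrightarrow> w z = Re (poly P z)"
proof -
  have "\<exists>P::complex poly. \<forall>z. cmod z = 1 \<longrightarrow> w z = Re (poly P z)"
    using assms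
  proof (induction w rule: real_polynomial_function.induct)
    case (linear w)
    then interpret bounded_linear w .
    have "w z = Re (poly [:0, complex_of_real (w 1) - \<i> * complex_of_real (w \<i>):] z)" for z
    proof -
      have "z = Re z *\<^sub>R 1 + Im z *\<^sub>R \<i>" by (simp add: complex_eq_iff)
      then have "w z = w (Re z *\<^sub>R 1 + Im z *\<^sub>R \<i>)" by simp
      also have "\<dots> = Re z * w 1 + Im z * w \<i>" by (simp add: add scale)
      finally show ?thesis by (simp add: algebra_simps)
    qed
    then show ?case by blast
  next
    case (const c)
    then show ?case by (intro exI[of _ "[:complex_of_real c:]"]) simp
  next
    case (add f g)
    then obtain A B where "\<forall>z. cmod z = 1 \<longrightarrow> f z = Re (poly A z)" "\<forall>z. cmod z = 1 \<longrightarrow> g z = Re (poly B z)"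
      by blast
    then show ?case by (intro exI[of _ "A + B"]) simp
  next
    case (mult f g)
    then obtain A B where A: "\<forall>z. cmod z = 1 \<longrightarrow> f z = Re (poly A z)"
      and B: "\<forall>z. cmod z = 1 \<longrightarrow> g z = Re (poly B z)" by blast
    obtain R where R: "\<And>z. cmod z = 1 \<Longrightarrow> Re (poly A z * cnj (poly B z)) = Re (poly R z)"
      using Re_poly_mult_cnj_on_circle by blast
    have "f z * g z = Re (poly (smult (1/2) (A * B + R)) z)" if "cmod z = 1" for z
    proof -
      have "f z * g z = (Re (poly A z * poly B z) + Re (poly A z * cnj (poly B z))) / 2"
        using A B that by (simp add: algebra_simps)
      also have "\<dots> = Re (poly (smult (1/2) (A * B + R)) z)"
        using R that by simp
      finally show ?thesis .
    qed
    then show ?case by blast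
  qed
  then show ?thesis using that by blast
qed

lemma Re_poly_approx_on_circle:
  fixes v :: "complex \<Rightarrow> real"
  assumes "continuous_on (sphere 0 1) v" "0 < e"
  obtains P :: "complex poly" where "\<And>z. cmod z = 1 \<Longrightarrow> \<bar>v z - Re (poly P z)\<bar> < e"
proof -
  obtain w where w: "real_polynomial_function w" "\<And>z. z \<in> sphere 0 1 \<Longrightarrow> \<bar>v z - w z\<bar> < e"
    using Stone_Weierstrass_real_polynomial_function[OF compact_sphere assms] by blast
  obtain P where P: "\<And>z. cmod z = 1 \<Longrightarrow> w z = Re (poly P z)"
    using real_polynomial_function_on_circle[OF w(1)] by blast
  show ?thesis
  proof (rule that)
    fix z :: complex assume "cmod z = 1"
    then show "\<bar>v z - Re (poly P z)\<bar> < e" using P w(2)[of z] by simp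
  qed
qed

lemma norm_le_exp_Re_of_circle_bound:
  fixes G Q :: "complex \<Rightarrow> complex"
  assumes "G holomorphic_on S" "Q holomorphic_on S" "open S" "cball 0 1 \<subseteq> S"
    and bound: "\<And>z. cmod z = 1 \<Longrightarrow> cmod (G z) \<le> exp (Re (Q z)) * K"
  shows "cmod (G 0) \<le> exp (Re (Q 0)) * K"
proof -
  have "cmod (exp (- Q 0) * G 0) \<le> integral {0..1} (\<lambda>x::real. K)"
  proof (rule norm_center_le_integral_circle[where S=S])
    fix x :: real
    have "cmod (exp (- Q (zeta x)) * G (zeta x)) = exp (- Re (Q (zeta x))) * cmod (G (zeta x))"
      by (simp add: norm_mult norm_exp_eq_Re)
    also have "\<dots> \<le> exp (- Re (Q (zeta x))) * (exp (Re (Q (zeta x))) * K)"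
      by (intro mult_left_mono bound) auto
    finally show "cmod (exp (- Q (zeta x)) * G (zeta x)) \<le> K"
      by (simp add: mult.assoc[symmetric] flip: exp_add)
  qed (use assms in \<open>auto intro!: holomorphic_intros\<close>)
  then have "cmod (exp (- Q 0) * G 0) \<le> K" by simp
  moreover have "cmod (G 0) = exp (Re (Q 0)) * cmod (exp (- Q 0) * G 0)"
    by (simp add: norm_mult norm_exp_eq_Re mult.assoc[symmetric] flip: exp_add)
  ultimately show ?thesis by (simp add: mult_left_mono)
qed

lemma log_norm_powr_approx_on_circle:
  fixes G :: "complex \<Rightarrow> complex"
  assumes "continuous_on (sphere 0 1) G" "0 < p" "0 < e"
  obtains P :: "complex poly"
  where "\<And>z. cmod z = 1 \<Longrightarrow> \<bar>ln (cmod (G z) powr p + e) / p - Re (poly P z)\<bar> < e"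
proof -
  have "continuous_on (sphere 0 1) (\<lambda>z. cmod (G z) powr p + e)"
    using assms by (intro continuous_on_powr' continuous_intros) auto
  moreover have "cmod (G z) powr p + e \<noteq> 0" for z
    using assms(3) by (metis add_nonneg_pos less_irrefl powr_ge_zero)
  ultimately have "continuous_on (sphere 0 1) (\<lambda>z. ln (cmod (G z) powr p + e) / p)"
    using assms(2) by (intro continuous_on_divide continuous_on_ln continuous_on_const) auto
  then show ?thesis using Re_poly_approx_on_circle assms(3) that by blast
qed

text \<open>Subharmonicity of \<open>|G|\<^sup>p\<close>: approximate \<open>log (|G|\<^sup>p + e) / p\<close> on the circle by the real part of a
  polynomial \<open>P\<close>, then use the mean value property for \<open>exp (- P) G\<close> and for \<open>exp (p P)\<close>.\<close>

lemma norm_powr_le_circle_mean_approx: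
  fixes G :: "complex \<Rightarrow> complex"
  assumes holG: "G holomorphic_on S" and S: "open S" "cball 0 1 \<subseteq> S" and p: "0 < p" and e: "0 < e"
  shows "cmod (G 0) powr p \<le> exp (2*p*e) * (integral {0..1} (\<lambda>x. cmod (G (zeta x)) powr p) + e)"
proof -
  define I where "I = integral {0..1} (\<lambda>x. cmod (G (zeta x)) powr p)"
  have "continuous_on (sphere 0 1) G"
    by (rule continuous_on_subset[OF holomorphic_on_imp_continuous_on[OF holG]]) (use S(2) in auto)
  then obtain P where P: "\<And>z. cmod z = 1 \<Longrightarrow> \<bar>ln (cmod (G z) powr p + e) / p - Re (poly P z)\<bar> < e"
    using log_norm_powr_approx_on_circle p e by blast
  have pos: "0 < cmod (G z) powr p + e" for z
    using e by (simp add: add_nonneg_pos)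
  have G_le: "cmod (G z) \<le> exp (Re (poly P z)) * exp e" if "cmod z = 1" for z
  proof -
    have "cmod (G z) = (cmod (G z) powr p) powr (1/p)" using p by (simp add: powr_powr)
    also have "\<dots> \<le> (cmod (G z) powr p + e) powr (1/p)" using p e by (intro powr_mono2) auto
    also have "\<dots> = exp (ln (cmod (G z) powr p + e) / p)" using pos[of z] by (simp add: powr_def)
    also have "\<dots> \<le> exp (Re (poly P z) + e)" using P[OF that] by simp
    finally show ?thesis by (simp add: exp_add)
  qed
  have G0: "cmod (G 0) \<le> exp (Re (poly P 0)) * exp e"
    by (rule norm_le_exp_Re_of_circle_bound[OF holG _ S G_le]) (auto intro: holomorphic_intros)
  have "((\<lambda>x. cmod (G (zeta x)) powr p) has_integral I) {0..1}"
    unfolding I_def using \<open>continuous_on (sphere 0 1) G\<close> p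
    by (intro integrable_integral integrable_continuous_real continuous_on_compose_zeta
        continuous_on_powr' continuous_intros) auto
  then have int_bound: "((\<lambda>x. exp (p*e) * (cmod (G (zeta x)) powr p + e)) has_integral exp (p*e) * (I + e)) {0..1}"
    using has_integral_const_real[of e 0 1] by (intro has_integral_mult_right has_integral_add) auto
  have "cmod (exp (of_real p * poly P 0)) \<le> integral {0..1} (\<lambda>x. exp (p*e) * (cmod (G (zeta x)) powr p + e))"
  proof (rule norm_center_le_integral_circle[where S=S])
    fix x :: real
    have "cmod (exp (of_real p * poly P (zeta x))) = exp (p * Re (poly P (zeta x)))"
      by (simp add: norm_exp_eq_Re)
    also have "\<dots> \<le> exp (p * (ln (cmod (G (zeta x)) powr p + e) / p + e))"
      using P[of "zeta x"] p by simp
    also have "\<dots> = exp (p*e) * (cmod (G (zeta x)) powr p + e)"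
      using p pos by (simp add: distrib_left exp_add mult.commute)
    finally show "cmod (exp (of_real p * poly P (zeta x))) \<le> exp (p*e) * (cmod (G (zeta x)) powr p + e)" .
  qed (use S int_bound in \<open>auto intro!: holomorphic_intros\<close>)
  also have "\<dots> = exp (p*e) * (I + e)"
    using int_bound by (rule integral_unique)
  finally have E0: "exp (p * Re (poly P 0)) \<le> exp (p*e) * (I + e)"
    by (simp add: norm_exp_eq_Re)
  have "cmod (G 0) powr p \<le> (exp (Re (poly P 0)) * exp e) powr p"
    using G0 p by (intro powr_mono2) auto
  also have "\<dots> = exp (p * Re (poly P 0)) * exp (p*e)"
    by (simp add: exp_powr_real powr_mult algebra_simps)
  also have "\<dots> \<le> exp (p*e) * (I + e) * exp (p*e)"
    using E0 by (intro mult_right_mono) auto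
  also have "\<dots> = exp (2*p*e) * (I + e)"
    by (simp add: exp_add[symmetric] algebra_simps)
  finally show ?thesis unfolding I_def .
qed

lemma norm_powr_le_circle_mean:
  fixes G :: "complex \<Rightarrow> complex"
  assumes "G holomorphic_on S" "open S" "cball 0 1 \<subseteq> S" "0 < p"
  shows "cmod (G 0) powr p \<le> integral {0..1} (\<lambda>x. cmod (G (zeta x)) powr p)"
proof -
  define I where "I = integral {0..1} (\<lambda>x. cmod (G (zeta x)) powr p)"
  have "((\<lambda>e. exp (2*p*e) * (I + e)) \<longlongrightarrow> exp (2*p*0) * (I + 0)) (at_right 0)"
    by (intro tendsto_intros)
  moreover have "eventually (\<lambda>e. cmod (G 0) powr p \<le> exp (2*p*e) * (I + e)) (at_right 0)"
    unfolding eventually_at_right_field I_def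
    using norm_powr_le_circle_mean_approx[OF assms] by (intro exI[of _ 1]) auto
  ultimately have "cmod (G 0) powr p \<le> exp (2*p*0) * (I + 0)"
    by (intro tendsto_lowerbound) auto
  then show ?thesis by (simp add: I_def)
qed

lemma norm_powr_le_circle_mean_radius:
  fixes G :: "complex \<Rightarrow> complex"
  assumes "G holomorphic_on ball 0 1" "0 < \<rho>" "\<rho> < 1" "0 < p"
  shows "cmod (G 0) powr p \<le> integral {0..1} (\<lambda>x. cmod (G (of_real \<rho> * zeta x)) powr p)"
proof -
  have maps: "(\<lambda>w. of_real \<rho> * w) ` ball 0 (1/\<rho>) \<subseteq> ball (0::complex) 1"
  proof
    fix y :: complex assume "y \<in> (\<lambda>w. of_real \<rho> * w) ` ball 0 (1/\<rho>)"
    then obtain w :: complex where "y = of_real \<rho> * w" "w \<in> ball 0 (1/\<rho>)" by blast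
    then show "y \<in> ball 0 1" using assms(2) by (simp add: norm_mult field_simps)
  qed
  have "(\<lambda>w. G (of_real \<rho> * w)) holomorphic_on ball 0 (1/\<rho>)"
    using holomorphic_on_compose_gen[OF _ assms(1) maps] by (simp add: o_def holomorphic_intros)
  moreover have "cball 0 1 \<subseteq> ball (0::complex) (1/\<rho>)"
  proof
    fix x :: complex assume "x \<in> cball 0 1"
    then have "\<rho> * norm x \<le> \<rho>" using assms(2) by (simp add: mult_left_le)
    then have "\<rho> * norm x < 1" using assms(3) by linarith
    then show "x \<in> ball 0 (1/\<rho>)" using assms(2,3) by (simp add: field_simps)
  qed
  ultimately show ?thesis
    using norm_powr_le_circle_mean[OF _ open_ball _ assms(4), of "\<lambda>w. G (of_real \<rho> * w)"] by simp
qed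

section \<open>Circle means of a nonzero holomorphic function\<close>

lemma holomorphic_factor_zero_at_origin:
  fixes g :: "complex \<Rightarrow> complex"
  assumes holg: "g holomorphic_on ball 0 1" and z0: "z0 \<in> ball 0 1" "g z0 \<noteq> 0"
  obtains n h where "h holomorphic_on ball 0 1" "h 0 \<noteq> 0" "\<And>z. z \<in> ball 0 1 \<Longrightarrow> g z = z^n * h z"
proof (cases "g 0 = 0")
  case False
  show ?thesis by (rule that[of g 0]) (use holg False in auto)
next
  case True
  have centre: "(0::complex) \<in> ball 0 1" by simp
  have "\<not> g constant_on ball 0 1"
    using True z0 centre unfolding constant_on_def by metis
  then obtain k \<rho> n where n: "0 < n" and rho: "0 < \<rho>" "ball (0::complex) \<rho> \<subseteq> ball 0 1"
    and holk: "k holomorphic_on ball 0 \<rho>" and gk: "\<And>w. w \<in> ball 0 \<rho> \<Longrightarrow> g w = (w - 0)^n * k w"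
    and knz: "\<And>w. w \<in> ball 0 \<rho> \<Longrightarrow> k w \<noteq> 0"
    by (rule holomorphic_factor_zero_nonconstant[OF holg open_ball connected_ball centre True])
      (rule that; assumption)
  define h where "h z = (if z = 0 then k 0 else g z / z^n)" for z
  have "h holomorphic_on ball 0 \<rho>"
    by (rule holomorphic_transform[OF holk]) (use gk in \<open>auto simp: h_def\<close>)
  moreover have "h holomorphic_on ball 0 1 - {0}"
    by (rule holomorphic_transform[of "\<lambda>z. g z / z^n"])
      (auto simp: h_def intro!: holomorphic_intros holomorphic_on_subset[OF holg])
  ultimately have "h holomorphic_on ball 0 \<rho> \<union> (ball 0 1 - {0})"
    by (intro holomorphic_on_Un) auto
  moreover have "ball 0 \<rho> \<union> (ball 0 1 - {0}) = ball (0::complex) 1"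
    using rho by (intro equalityI Un_least) auto
  ultimately have "h holomorphic_on ball 0 1" by simp
  moreover have "h 0 \<noteq> 0" using knz[of 0] rho by (simp add: h_def)
  moreover have "g z = z^n * h z" if "z \<in> ball 0 1" for z
    using True n by (cases "z = 0") (auto simp: h_def)
  ultimately show ?thesis by (rule that)
qed

lemma continuous_on_circle_radius:
  fixes F :: "complex \<Rightarrow> 'b::topological_space"
  assumes "continuous_on (ball 0 1) F" "0 \<le> \<rho>" "\<rho> < 1"
  shows "continuous_on T (\<lambda>x. F (of_real \<rho> * zeta x))"
  by (rule continuous_on_compose2[OF assms(1) continuous_on_mult[OF continuous_on_const continuous_on_zeta]])
    (use assms(2,3) in \<open>auto simp: norm_mult\<close>)

lemma nn_integral_circle_eq_integral:
  fixes F :: "real \<Rightarrow> real"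
  assumes "continuous_on {0..1} F" "\<And>x. 0 \<le> F x"
  shows "(\<integral>\<^sup>+x\<in>{0..<1}. ennreal (F x) \<partial>lborel) = ennreal (integral {0..1} F)"
proof -
  have "(\<integral>\<^sup>+x\<in>{0..<1}. ennreal (F x) \<partial>lborel) = (\<integral>\<^sup>+x\<in>{0..1}. ennreal (F x) \<partial>lborel)"
    using AE_lborel_singleton[of 1] by (intro nn_integral_cong_AE) (auto elim!: eventually_mono split: split_indicator)
  also have "\<dots> = ennreal (integral {0..1} F)"
    using assms by (intro nn_integral_has_integral_lebesgue' integrable_integral integrable_continuous_real) auto
  finally show ?thesis .
qed

lemma circle_mean_lower_bound:
  fixes g h :: "complex \<Rightarrow> complex"
  assumes holg: "g holomorphic_on ball 0 1" and holh: "h holomorphic_on ball 0 1"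
    and gh: "\<And>z. z \<in> ball 0 1 \<Longrightarrow> g z = z^n * h z" and \<rho>: "0 < \<rho>" "\<rho> < 1" and p: "0 < p"
  shows "ennreal ((\<rho> ^ n) powr p * cmod (h 0) powr p)
    \<le> (\<integral>\<^sup>+x\<in>{0..<1}. ennreal (cmod (g (of_real \<rho> * zeta x)) powr p) \<partial>lborel)"
proof -
  have in_ball: "of_real \<rho> * zeta x \<in> ball 0 1" for x using \<rho> by (simp add: norm_mult)
  have "(\<rho> ^ n) powr p * cmod (h 0) powr p
      \<le> (\<rho> ^ n) powr p * integral {0..1} (\<lambda>x. cmod (h (of_real \<rho> * zeta x)) powr p)"
    using norm_powr_le_circle_mean_radius[OF holh \<rho> p] by (simp add: mult_left_mono)
  also have "\<dots> = integral {0..1} (\<lambda>x. cmod (g (of_real \<rho> * zeta x)) powr p)"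
    using \<rho> by (simp add: gh[OF in_ball] norm_mult norm_power powr_mult)
  finally have "ennreal ((\<rho> ^ n) powr p * cmod (h 0) powr p)
      \<le> ennreal (integral {0..1} (\<lambda>x. cmod (g (of_real \<rho> * zeta x)) powr p))"
    by (rule ennreal_leI)
  also have "\<dots> = (\<integral>\<^sup>+x\<in>{0..<1}. ennreal (cmod (g (of_real \<rho> * zeta x)) powr p) \<partial>lborel)"
    using holomorphic_on_imp_continuous_on[OF holg] \<rho> p
    by (intro nn_integral_circle_eq_integral[symmetric] continuous_on_powr' continuous_intros
        continuous_on_circle_radius) auto
  finally show ?thesis .
qed

lemma circle_means_not_tendsto_zero:
  fixes g :: "complex \<Rightarrow> complex" and r :: "nat \<Rightarrow> real"
  assumes holg: "g holomorphic_on ball 0 1" and z0: "z0 \<in> ball 0 1" "g z0 \<noteq> 0"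
    and r: "\<And>l. 0 \<le> r l" "\<And>l. r l < 1" "r \<longlonglongrightarrow> 1" and p: "0 < p"
  shows "\<not> (\<lambda>l. \<integral>\<^sup>+x\<in>{0..<1}. ennreal (cmod (g (of_real (r l) * zeta x)) powr p) \<partial>lborel) \<longlonglongrightarrow> 0"
proof
  assume lim0: "(\<lambda>l. \<integral>\<^sup>+x\<in>{0..<1}. ennreal (cmod (g (of_real (r l) * zeta x)) powr p) \<partial>lborel) \<longlonglongrightarrow> 0"
  obtain n h where holh: "h holomorphic_on ball 0 1" and h0: "h 0 \<noteq> 0"
    and gh: "\<And>z. z \<in> ball 0 1 \<Longrightarrow> g z = z^n * h z"
    using holomorphic_factor_zero_at_origin[OF holg z0] by blast
  define a where "a = cmod (h 0) powr p"
  have lim_lower: "(\<lambda>l. ennreal ((r l ^ n) powr p * a)) \<longlonglongrightarrow> ennreal ((1 ^ n) powr p * a)"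
    by (intro tendsto_ennrealI tendsto_intros r(3)) simp
  have "\<forall>\<^sub>F l in sequentially. 0 < r l"
    using order_tendstoD(1)[OF r(3), of 0] by simp
  then have "\<forall>\<^sub>F l in sequentially. ennreal ((r l ^ n) powr p * a)
      \<le> (\<integral>\<^sup>+x\<in>{0..<1}. ennreal (cmod (g (of_real (r l) * zeta x)) powr p) \<partial>lborel)"
    unfolding a_def by eventually_elim (rule circle_mean_lower_bound[OF holg holh gh _ r(2) p])
  from tendsto_le[OF sequentially_bot lim0 lim_lower this]
  have "ennreal ((1 ^ n) powr p * a) \<le> 0" .
  then show False using h0 by (simp add: a_def)
qed

section \<open>Dominated convergence of the circle means\<close>

lemma enn_powr_eq_top_iff [simp]: "enn_powr a t = top \<longleftrightarrow> a = top"
  by (simp add: enn_powr_def)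

lemma measurable_enn_powr [measurable]:
  assumes [measurable]: "F \<in> borel_measurable M"
  shows "(\<lambda>x. enn_powr (F x) t) \<in> borel_measurable M"
  unfolding enn_powr_def by measurable

lemma ennreal_powr_le_enn_powr_suminf:
  fixes a w :: "nat \<Rightarrow> real"
  assumes p: "0 < p" and q: "0 < q" and w: "\<And>l. 1 \<le> w l" and a: "\<And>l. 0 \<le> a l"
  shows "ennreal (a k powr p) \<le> enn_powr (\<Sum>l. ennreal (w l * a l powr q)) (p/q)"
proof (cases "(\<Sum>l. ennreal (w l * a l powr q)) = \<infinity>")
  case False
  have nonneg: "0 \<le> w l * a l powr q" for l using w[of l] by simp
  have summ: "summable (\<lambda>l. w l * a l powr q)"
    using False nonneg by (intro summable_suminf_not_top) auto
  have "a k powr q \<le> w k * a k powr q" using w[of k] by (simp add: mult_le_cancel_right1)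
  also have "\<dots> \<le> (\<Sum>l. w l * a l powr q)"
    using sum_le_suminf[OF summ, of "{k}"] nonneg by simp
  finally have "(a k powr q) powr (p/q) \<le> (\<Sum>l. w l * a l powr q) powr (p/q)"
    using p q by (intro powr_mono2) auto
  moreover have "(a k powr q) powr (p/q) = a k powr p" using q by (simp add: powr_powr)
  ultimately show ?thesis
    using summ nonneg by (simp add: enn_powr_def suminf_ennreal2 suminf_nonneg ennreal_leI)
qed (simp add: enn_powr_def)

lemma powr_tendsto_zero_if_suminf_finite:
  fixes a w :: "nat \<Rightarrow> real"
  assumes p: "0 < p" and q: "0 < q" and w: "\<And>l. 1 \<le> w l" and a: "\<And>l. 0 \<le> a l"
    and fin: "(\<Sum>l. ennreal (w l * a l powr q)) \<noteq> \<infinity>"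
  shows "(\<lambda>l. a l powr p) \<longlonglongrightarrow> 0"
proof -
  have "0 \<le> w l * a l powr q" for l using w[of l] by simp
  then have "summable (\<lambda>l. w l * a l powr q)"
    using fin by (intro summable_suminf_not_top) auto
  then have "(\<lambda>l. w l * a l powr q) \<longlonglongrightarrow> 0" by (rule summable_LIMSEQ_zero)
  then have "(\<lambda>l. a l powr q) \<longlonglongrightarrow> 0"
    by (rule tendsto_sandwich[rotated 2, OF tendsto_const])
      (use w in \<open>auto intro!: always_eventually simp: mult_le_cancel_right1\<close>)
  then have "(\<lambda>l. (a l powr q) powr (p/q)) \<longlonglongrightarrow> 0"
    by (rule tendsto_zero_powrI[OF _ tendsto_const]) (use p q in auto)
  then show ?thesis using q by (simp add: powr_powr)
qed

lemma nn_integral_powr_tendsto_zero: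
  fixes u :: "nat \<Rightarrow> 'a \<Rightarrow> real" and w :: "nat \<Rightarrow> real"
  assumes p: "0 < p" and q: "0 < q" and w: "\<And>l. 1 \<le> w l" and u: "\<And>l x. 0 \<le> u l x"
    and [measurable]: "\<And>l. u l \<in> borel_measurable M"
    and fin: "(\<integral>\<^sup>+x. enn_powr (\<Sum>l. ennreal (w l * u l x powr q)) (p/q) \<partial>M) < \<infinity>"
  shows "(\<lambda>l. \<integral>\<^sup>+x. ennreal (u l x powr p) \<partial>M) \<longlonglongrightarrow> 0"
proof -
  define B where "B x = enn_powr (\<Sum>l. ennreal (w l * u l x powr q)) (p/q)" for x
  have [measurable]: "B \<in> borel_measurable M" unfolding B_def by measurable
  have "AE x in M. B x \<noteq> \<infinity>"
    using fin unfolding B_def by (intro nn_integral_PInf_AE) auto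
  then have "AE x in M. (\<lambda>l. ennreal (u l x powr p)) \<longlonglongrightarrow> ennreal 0"
  proof eventually_elim
    case (elim x)
    then have "(\<Sum>l. ennreal (w l * u l x powr q)) \<noteq> \<infinity>" by (auto simp: B_def)
    then show ?case
      using powr_tendsto_zero_if_suminf_finite[OF p q w, of "\<lambda>l. u l x"] u by (intro tendsto_ennrealI) auto
  qed
  moreover have "ennreal (u l x powr p) \<le> B x" for l x
    unfolding B_def by (rule ennreal_powr_le_enn_powr_suminf[OF p q w u])
  ultimately have "(\<lambda>l. \<integral>\<^sup>+x. ennreal (u l x powr p) \<partial>M) \<longlonglongrightarrow> (\<integral>\<^sup>+x. 0 \<partial>M)"
    using fin by (intro nn_integral_dominated_convergence[where w=B]) (auto simp: B_def)
  then show ?thesis by simp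
qed

lemma norm3_finite_imp_circle_means_tendsto_zero:
  fixes f :: "complex \<Rightarrow> 'a::{complex_normed_vector,banach}"
  assumes p: "0 < p" and q: "0 < q" and s: "0 \<le> s" and r: "\<And>l. 0 \<le> r l" "\<And>l. r l < 1"
    and f: "continuous_on (ball 0 1) f" and fin: "norm3 f r p q tau s < \<infinity>"
  shows "(\<lambda>l. \<integral>\<^sup>+x\<in>{0..<1}. ennreal (norm (f (of_real (r l) * zeta x)) powr p) \<partial>lborel) \<longlonglongrightarrow> 0"
proof -
  define u where "u l x = norm (f (of_real (r l) * zeta x))" for l x
  let ?R = "restrict_space lborel {0..<1::real}"
  have "norm3_arc f r p q tau s 0 0 \<le> norm3 f r p q tau s"
    unfolding norm3_def
    using SUP_upper[of "(0,0)" "{(j, k). k < (2::nat) ^ j}" "\<lambda>(j,k). norm3_arc f r p q tau s j k"] by simp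
  moreover have "norm3_arc f r p q tau s 0 0
      = enn_powr (\<integral>\<^sup>+x. enn_powr (\<Sum>l. ennreal (2 powr (s * real l * q) * u l x powr q)) (p/q) \<partial>?R) (1/p)"
    by (simp add: norm3_arc_def u_def nn_integral_restrict_space)
  ultimately have "enn_powr (\<integral>\<^sup>+x. enn_powr (\<Sum>l. ennreal (2 powr (s * real l * q) * u l x powr q)) (p/q) \<partial>?R) (1/p) < \<infinity>"
    using fin by (metis order.strict_trans1)
  then have "(\<integral>\<^sup>+x. enn_powr (\<Sum>l. ennreal (2 powr (s * real l * q) * u l x powr q)) (p/q) \<partial>?R) < \<infinity>"
    by (simp add: less_top[symmetric])
  moreover have "0 \<le> u l x" for l x
    by (simp add: u_def)
  moreover have "1 \<le> 2 powr (s * real l * q)" for l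
    using s q by (intro ge_one_powr_ge_zero) auto
  moreover have "u l \<in> borel_measurable ?R" for l
  proof -
    have "continuous_on UNIV (u l)"
      unfolding u_def by (intro continuous_on_norm continuous_on_circle_radius[OF f r(1,2)[of l]])
    then show ?thesis by (intro measurable_restrict_space1) (simp add: borel_measurable_continuous_onI)
  qed
  ultimately have "(\<lambda>l. \<integral>\<^sup>+x. ennreal (u l x powr p) \<partial>?R) \<longlonglongrightarrow> 0"
    using p q by (intro nn_integral_powr_tendsto_zero) auto
  then show ?thesis by (simp add: u_def nn_integral_restrict_space)
qed

lemma radii_tendsto_one:
  fixes r :: "nat \<Rightarrow> real"
  assumes "\<And>l. r l < 1" "\<And>l. 1 - r l \<le> C * 2 powr (- real l)"
  shows "r \<longlonglongrightarrow> 1"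
proof (rule tendsto_sandwich[of "\<lambda>l. 1 - C * 2 powr (- real l)" _ _ "\<lambda>_. 1"])
  have "(\<lambda>l. 2 powr (- real l)) \<longlonglongrightarrow> 0"
    by (simp add: powr_minus powr_realpow LIMSEQ_inverse_realpow_zero)
  then have "(\<lambda>l. 1 - C * 2 powr (- real l)) \<longlonglongrightarrow> 1 - C * 0"
    by (intro tendsto_intros)
  then show "(\<lambda>l. 1 - C * 2 powr (- real l)) \<longlonglongrightarrow> 1" by simp
qed (use assms in \<open>auto simp: algebra_simps less_imp_le\<close>)

theorem proposition11:
  fixes f :: "complex \<Rightarrow> 'a::{complex_normed_vector,banach}"
    and r :: "nat \<Rightarrow> real" and p q tau s c C :: real
  assumes "0 < p" "0 < q" "tau \<ge> 0" "s \<ge> 0"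
    and "\<And>l. 0 \<le> r l \<and> r l < 1"
    and "0 < c"
    and "\<And>l. c * 2 powr (- real l) \<le> 1 - r l \<and> 1 - r l \<le> C * 2 powr (- real l)"
    and "analytic_disc f"
    and "norm3 f r p q tau s < \<infinity>"
  shows "\<forall>z\<in>ball 0 1. f z = 0"
proof (rule ccontr)
  assume "\<not> (\<forall>z\<in>ball 0 1. f z = 0)"
  then obtain z0 where z0: "z0 \<in> ball 0 1" "f z0 \<noteq> 0" by blast
  obtain \<phi> :: "'a \<Rightarrow> complex" where add: "\<And>x y. \<phi> (x + y) = \<phi> x + \<phi> y"
    and sc: "\<And>c x. \<phi> (c *\<^sub>C x) = c * \<phi> x" and bound: "\<And>x. cmod (\<phi> x) \<le> norm x"
    and nonzero: "\<phi> (f z0) \<noteq> 0"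
    using complex_norming_functional[OF z0(2)] by blast
  have hol: "(\<lambda>z. \<phi> (f z)) holomorphic_on ball 0 1"
    using analytic_disc_functional_holomorphic[OF assms(8) add sc bound] .
  have r: "\<And>l. 0 \<le> r l" "\<And>l. r l < 1"
    using assms(5) by auto
  have r_lim: "r \<longlonglongrightarrow> 1"
    by (rule radii_tendsto_one[where C=C]) (use assms(5,7) in auto)
  have "(\<lambda>l. \<integral>\<^sup>+x\<in>{0..<1}. ennreal (norm (f (of_real (r l) * zeta x)) powr p) \<partial>lborel) \<longlonglongrightarrow> 0"
    using norm3_finite_imp_circle_means_tendsto_zero[OF assms(1,2,4) r
        analytic_disc_continuous_on[OF assms(8)] assms(9)] .
  then have "(\<lambda>l. \<integral>\<^sup>+x\<in>{0..<1}. ennreal (cmod (\<phi> (f (of_real (r l) * zeta x))) powr p) \<partial>lborel) \<longlonglongrightarrow> 0"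
    by (rule tendsto_sandwich[rotated 2, OF tendsto_const])
      (use assms(1) bound in \<open>auto intro!: always_eventually nn_integral_mono ennreal_leI powr_mono2
          mult_right_mono\<close>)
  then show False
    using circle_means_not_tendsto_zero[OF hol z0(1) nonzero r r_lim assms(1)] by blast
qed

end
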